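(* Let $\mathcal{A}=\{A_0,\ldots,A_d\}$ be an association scheme with splitting field $L$, and let $E\subseteq\mathbb{C}$ be a field containing $L$ that is closed under complex conjugation. If $\psi:E[\mathcal{A}]\to E[\mathcal{A}]$ is a non-zero $E$-linear map with $(MN)^\psi=M^\psi N^\psi$ and $(M\circ N)^\psi=M^\psi\circ N^\psi$ for all $M,N\in E[\mathcal{A}]$, then $(M^T)^\psi=(M^\psi)^T$ and $(M^* )^\psi=(M^\psi)^*$ for all $M\in E[\mathcal{A}]$.
   Context: An association scheme on $v$ vertices with $d$ classes is a set $\mathcal{A}=\{A_0,\ldots,A_d\}$ of $v\times v$ $(0,1)$-matrices such that $A_0=I$, $\sum_i A_i=J$ (the all-ones matrix), $A_i^T\in\mathcal{A}$ for all $i$, $A_iA_j=A_jA_i$ for all $i,j$, and each $A_iA_j$ lies in the span of $\mathcal{A}$. Its principal idempotents $E_0,\ldots,E_d$ are the pairwise orthogonal Hermitian idempotents with $\sum_jE_j=I$ forming a basis of the span of $\mathcal{A}$, with $A_iE_j=p_i(j)E_j$; the splitting field $L$ is $\mathbb{Q}$ adjoined all $p_i(j)$. $E[\mathcal{A}]$ is the $E$-span of $\mathcal{A}$; $\circ$ denotes the Schur (entrywise) product and $M^*$ the conjugate transpose. *)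

theory Defs
  imports "HOL-Analysis.Analysis"
begin

type_synonym 'n cmat = "complex^'n^'n"

definition mscale :: "complex \<Rightarrow> 'n::finite cmat \<Rightarrow> 'n cmat" where
  "mscale c M = (\<chi> i j. c * M $ i $ j)"

definition schur :: "'n::finite cmat \<Rightarrow> 'n cmat \<Rightarrow> 'n cmat" (infixl "\<circ>\<^sub>S" 70) where
  "schur M N = (\<chi> i j. M $ i $ j * N $ i $ j)"

definition cstar :: "'n::finite cmat \<Rightarrow> 'n cmat" where
  "cstar M = (\<chi> i j. cnj (M $ j $ i))"

definition allones :: "'n::finite cmat" where
  "allones = (\<chi> i j. 1)"

definition span_over :: "complex set \<Rightarrow> nat \<Rightarrow> (nat \<Rightarrow> 'n::finite cmat) \<Rightarrow> 'n cmat set" where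
  "span_over K d B = {M. \<exists>c. (\<forall>k\<le>d. c k \<in> K) \<and> M = (\<Sum>k\<le>d. mscale (c k) (B k))}"

definition assoc_scheme :: "nat \<Rightarrow> (nat \<Rightarrow> 'n::finite cmat) \<Rightarrow> bool" where
  "assoc_scheme d A \<longleftrightarrow>
     inj_on A {..d} \<and>
     (\<forall>i\<le>d. \<forall>x y. A i $ x $ y = 0 \<or> A i $ x $ y = 1) \<and>
     A 0 = mat 1 \<and>
     (\<Sum>i\<le>d. A i) = allones \<and>
     (\<forall>i\<le>d. \<exists>j\<le>d. transpose (A i) = A j) \<and>
     (\<forall>i\<le>d. \<forall>j\<le>d. A i ** A j = A j ** A i) \<and>
     (\<forall>i\<le>d. \<forall>j\<le>d. A i ** A j \<in> span_over UNIV d A)"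

definition principal_idempotents :: "nat \<Rightarrow> (nat \<Rightarrow> 'n::finite cmat) \<Rightarrow> (nat \<Rightarrow> 'n cmat) \<Rightarrow> bool" where
  "principal_idempotents d A Ep \<longleftrightarrow>
     (\<forall>j\<le>d. Ep j ** Ep j = Ep j \<and> cstar (Ep j) = Ep j) \<and>
     (\<forall>j\<le>d. \<forall>k\<le>d. j \<noteq> k \<longrightarrow> Ep j ** Ep k = 0) \<and>
     (\<Sum>j\<le>d. Ep j) = mat 1 \<and>
     (\<forall>j\<le>d. Ep j \<in> span_over UNIV d A) \<and>
     (\<forall>i\<le>d. A i \<in> span_over UNIV d Ep) \<and>
     (\<forall>c. (\<Sum>j\<le>d. mscale (c j) (Ep j)) = 0 \<longrightarrow> (\<forall>j\<le>d. c j = 0))"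

text \<open>The splitting field L = Q(p_i(j)) is contained in the field K: every eigenvalue
  p_i(j), defined by A_i E_j = p_i(j) E_j, lies in K.\<close>
definition contains_splitting_field :: "complex set \<Rightarrow> nat \<Rightarrow> (nat \<Rightarrow> 'n::finite cmat) \<Rightarrow> bool" where
  "contains_splitting_field K d A \<longleftrightarrow>
     \<rat> \<subseteq> K \<and>
     (\<forall>Ep. principal_idempotents d A Ep \<longrightarrow>
        (\<forall>i\<le>d. \<forall>j\<le>d. \<forall>p. A i ** Ep j = mscale p (Ep j) \<longrightarrow> p \<in> K))"

definition subfield_complex :: "complex set \<Rightarrow> bool" where
  "subfield_complex K \<longleftrightarrow> 0 \<in> K \<and> 1 \<in> K \<and>
     (\<forall>x\<in>K. \<forall>y\<in>K. x + y \<in> K \<and> x * y \<in> K) \<and>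
     (\<forall>x\<in>K. - x \<in> K \<and> inverse x \<in> K)"

end

theory Submission
  imports Defs
begin

text \<open>Every pair of vertices lies in exactly one relation, so the span of the scheme consists of
  the matrices that are constant on relations, and the \<open>A\<^sub>k\<close> are its primitive Schur
  idempotents. A Schur-multiplicative \<open>\<psi>\<close> maps each \<open>A\<^sub>k\<close> to a Schur idempotent, i.e. to a
  sum of basis matrices; \<open>\<psi>\<close> is injective (a non-trivial kernel would contain some \<open>A\<^sub>k\<close>,
  hence \<open>A\<^sub>k A\<^sub>k\<^sup>T\<close>, whose diagonal is non-zero, hence \<open>I\<close> and everything), and the images of
  the non-zero \<open>A\<^sub>k\<close> are Schur-orthogonal, so counting shows that \<open>\<psi>\<close> permutes the \<open>A\<^sub>k\<close>.
  Now \<open>A\<^sub>j = A\<^sub>k\<^sup>T\<close> is characterised by \<open>I \<circ> (A\<^sub>k A\<^sub>j) \<noteq> 0\<close>, a property \<open>\<psi>\<close> preserves since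
  \<open>\<psi> I = I\<close>. Linearity extends this to the span, and conjugate transposition agrees with
  transposition on the real matrices \<open>A\<^sub>k\<close>.\<close>

lemma transpose_sum: "transpose (\<Sum>i\<in>I. M i) = (\<Sum>i\<in>I. transpose (M i :: 'n::finite cmat))"
  by (simp add: vec_eq_iff transpose_def)

lemma transpose_mscale: "transpose (mscale c M) = mscale c (transpose M)"
  by (simp add: vec_eq_iff transpose_def mscale_def)

lemma cstar_sum: "cstar (\<Sum>i\<in>I. M i) = (\<Sum>i\<in>I. cstar (M i :: 'n::finite cmat))"
  by (simp add: vec_eq_iff cstar_def cnj_sum)

lemma cstar_mscale: "cstar (mscale c M) = mscale (cnj c) (cstar M)"
  by (simp add: vec_eq_iff cstar_def mscale_def)

lemma cstar_eq_transpose_if_01: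
  assumes "\<And>i j. M $ i $ j = 0 \<or> M $ i $ j = 1"
  shows "cstar M = transpose M"
proof -
  have "cnj (M $ j $ i) = M $ j $ i" for i j
    using assms[of j i] by auto
  thus ?thesis by (simp add: vec_eq_iff cstar_def transpose_def)
qed

lemma mscale_0_left: "mscale 0 M = 0"
  by (simp add: vec_eq_iff mscale_def)

lemma schur_idempotent_entry_01:
  assumes "M \<circ>\<^sub>S M = M"
  shows "M $ i $ j = 0 \<or> M $ i $ j = 1"
proof -
  have "M $ i $ j * M $ i $ j = M $ i $ j"
    using arg_cong[OF assms, of "\<lambda>N. N $ i $ j"] by (simp add: schur_def)
  hence "M $ i $ j * (M $ i $ j - 1) = 0" by (simp add: algebra_simps)
  thus ?thesis by simp
qed

lemma subfield_complex_sum: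
  assumes "subfield_complex K" "finite I" "\<And>i. i \<in> I \<Longrightarrow> f i \<in> K"
  shows "sum f I \<in> K"
  using assms(2,3)
  by (induction I rule: finite_induct) (use assms(1) in \<open>auto simp: subfield_complex_def\<close>)

lemma disjoint_nonempty_subsets_singletons:
  fixes S :: "'a \<Rightarrow> 'a set"
  assumes fin: "finite Z" and sub: "\<And>k. k \<in> Z \<Longrightarrow> S k \<subseteq> Z"
    and ne: "\<And>k. k \<in> Z \<Longrightarrow> S k \<noteq> {}"
    and dis: "\<And>k l. k \<in> Z \<Longrightarrow> l \<in> Z \<Longrightarrow> k \<noteq> l \<Longrightarrow> S k \<inter> S l = {}"
  shows "\<forall>k\<in>Z. card (S k) = 1" and "(\<Union>k\<in>Z. S k) = Z"
proof -
  have finS: "finite (S k)" if "k \<in> Z" for k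
    using sub[OF that] fin finite_subset by blast
  have ge: "card (S k) \<ge> 1" if "k \<in> Z" for k
    using finS[OF that] ne[OF that] by (simp add: Suc_leI card_gt_0_iff)
  have U: "(\<Union>k\<in>Z. S k) \<subseteq> Z" using sub by blast
  have "(\<Sum>k\<in>Z. card (S k)) = card (\<Union>k\<in>Z. S k)"
    by (rule card_UN_disjoint[symmetric]) (use fin finS dis in auto)
  also have "\<dots> \<le> card Z" using fin U card_mono by blast
  finally have "(\<Sum>k\<in>Z. card (S k)) \<le> (\<Sum>k\<in>Z. 1)" by simp
  moreover have "(\<Sum>k\<in>Z. 1) \<le> (\<Sum>k\<in>Z. card (S k))"
    using ge by (intro sum_mono) auto
  ultimately have sum_eq: "(\<Sum>k\<in>Z. card (S k)) = (\<Sum>k\<in>Z. 1)" by linarith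
  show card1: "\<forall>k\<in>Z. card (S k) = 1"
    using sum_mono_inv[OF sum_eq[symmetric] ge _ fin] by simp
  have "card (\<Union>k\<in>Z. S k) = card Z"
    using card_UN_disjoint[of Z S] fin finS dis card1 by simp
  thus "(\<Union>k\<in>Z. S k) = Z" using card_subset_eq[OF fin U] by simp
qed

locale association_scheme =
  fixes d :: nat and A :: "nat \<Rightarrow> 'n::finite cmat"
  assumes scheme: "assoc_scheme d A"
begin

lemma A_entry_01: "k \<le> d \<Longrightarrow> A k $ x $ y = 0 \<or> A k $ x $ y = 1"
  using scheme unfolding assoc_scheme_def by blast

lemma A_0: "A 0 = mat 1"
  using scheme unfolding assoc_scheme_def by blast

lemma transpose_A: "k \<le> d \<Longrightarrow> \<exists>j\<le>d. transpose (A k) = A j"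
  using scheme unfolding assoc_scheme_def by blast

lemma ex1_relation: "\<exists>!k. k \<le> d \<and> A k $ x $ y = 1"
proof -
  let ?S = "{..d} \<inter> {k. A k $ x $ y = 1}"
  have "(\<Sum>i\<le>d. A i $ x $ y) = 1"
    using scheme unfolding assoc_scheme_def allones_def by (simp flip: sum_component)
  moreover have "(\<Sum>i\<le>d. A i $ x $ y) = (\<Sum>i\<le>d. if A i $ x $ y = 1 then 1 else 0)"
    by (rule sum.cong) (use A_entry_01 in auto)
  moreover have "(\<Sum>i\<le>d. (if A i $ x $ y = 1 then 1 else 0::complex)) = of_nat (card ?S)"
    by (simp add: sum.If_cases)
  ultimately have "card ?S = 1"
    by (metis of_nat_eq_1_iff)
  then obtain k where "?S = {k}" using card_1_singletonE by blast
  thus ?thesis by (intro ex1I[of _ k]) blast+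
qed

definition class_of :: "'n \<Rightarrow> 'n \<Rightarrow> nat" where
  "class_of x y = (THE k. k \<le> d \<and> A k $ x $ y = 1)"

lemma class_of_le: "class_of x y \<le> d"
  and A_class_of: "A (class_of x y) $ x $ y = 1"
  using theI'[OF ex1_relation[of x y]] unfolding class_of_def by auto

lemma A_entry: "k \<le> d \<Longrightarrow> A k $ x $ y = (if k = class_of x y then 1 else 0)"
  using ex1_relation[of x y] class_of_le[of x y] A_class_of[of x y] A_entry_01[of k x y] by auto

lemma class_of_diag: "class_of x x = 0"
  using A_entry[of 0 x x] A_0 by (simp add: mat_def split: if_splits)

lemma sum_mult_A_entry: "(\<Sum>k\<le>d. g k * A k $ x $ y) = g (class_of x y)"
proof -
  have "(\<Sum>k\<le>d. g k * A k $ x $ y) = (\<Sum>k\<le>d. if k = class_of x y then g k else 0)"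
    by (rule sum.cong) (auto simp: A_entry)
  thus ?thesis using class_of_le[of x y] by simp
qed

definition class_matrix :: "(nat \<Rightarrow> complex) \<Rightarrow> 'n cmat" where
  "class_matrix f = (\<chi> x y. f (class_of x y))"

lemma class_matrix_nth [simp]: "class_matrix f $ x $ y = f (class_of x y)"
  by (simp add: class_matrix_def)

lemma class_matrix_add: "class_matrix f + class_matrix g = class_matrix (\<lambda>k. f k + g k)"
  by (simp add: vec_eq_iff)

lemma mscale_class_matrix: "mscale c (class_matrix f) = class_matrix (\<lambda>k. c * f k)"
  by (simp add: vec_eq_iff mscale_def)

lemma schur_class_matrix: "class_matrix f \<circ>\<^sub>S class_matrix g = class_matrix (\<lambda>k. f k * g k)"
  by (simp add: vec_eq_iff schur_def)

lemma zero_eq_class_matrix: "0 = class_matrix (\<lambda>_. 0)"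
  by (simp add: vec_eq_iff)

lemma A_eq_class_matrix: "k \<le> d \<Longrightarrow> A k = class_matrix (\<lambda>j. if j = k then 1 else 0)"
  by (auto simp: vec_eq_iff A_entry)

lemma span_over_iff:
  assumes "0 \<in> K"
  shows "M \<in> span_over K d A \<longleftrightarrow> (\<exists>f. M = class_matrix f) \<and> (\<forall>x y. M $ x $ y \<in> K)"
proof
  assume "M \<in> span_over K d A"
  then obtain c where c: "\<forall>k\<le>d. c k \<in> K" "M = (\<Sum>k\<le>d. mscale (c k) (A k))"
    unfolding span_over_def by blast
  have entry: "M $ x $ y = c (class_of x y)" for x y
    using c(2) sum_mult_A_entry[of c x y] by (simp add: mscale_def)
  hence "M = class_matrix c" by (simp add: vec_eq_iff)
  thus "(\<exists>f. M = class_matrix f) \<and> (\<forall>x y. M $ x $ y \<in> K)"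
    using entry c(1) class_of_le by auto
next
  assume "(\<exists>f. M = class_matrix f) \<and> (\<forall>x y. M $ x $ y \<in> K)"
  then obtain f where f: "M = class_matrix f" "\<forall>x y. M $ x $ y \<in> K" by blast
  define c where "c k = (if \<exists>x y. class_of x y = k then f k else 0)" for k
  have "\<forall>k\<le>d. c k \<in> K" using f assms unfolding c_def by auto
  moreover have "M = (\<Sum>k\<le>d. mscale (c k) (A k))"
    using sum_mult_A_entry[of c] f(1) by (auto simp: vec_eq_iff mscale_def c_def)
  ultimately show "M \<in> span_over K d A" unfolding span_over_def by blast
qed

lemma class_matrix_mult: "\<exists>h. class_matrix f ** class_matrix g = class_matrix h"
proof -
  have "\<forall>i\<le>d. \<forall>j\<le>d. \<exists>h. A i ** A j = class_matrix h"
    using scheme span_over_iff[of UNIV] unfolding assoc_scheme_def by blast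
  then obtain H where H: "\<And>i j. i \<le> d \<Longrightarrow> j \<le> d \<Longrightarrow> A i ** A j = class_matrix (H i j)"
    by metis
  have "(class_matrix f ** class_matrix g) $ x $ y
      = (\<Sum>i\<le>d. \<Sum>j\<le>d. f i * g j * H i j (class_of x y))" for x y
  proof -
    have "(class_matrix f ** class_matrix g) $ x $ y
        = (\<Sum>z\<in>UNIV. (\<Sum>i\<le>d. f i * A i $ x $ z) * (\<Sum>j\<le>d. g j * A j $ z $ y))"
      by (simp add: matrix_matrix_mult_def sum_mult_A_entry)
    also have "\<dots> = (\<Sum>z\<in>UNIV. \<Sum>i\<le>d. \<Sum>j\<le>d. f i * g j * (A i $ x $ z * A j $ z $ y))"
      by (simp add: sum_product algebra_simps)
    also have "\<dots> = (\<Sum>i\<le>d. \<Sum>j\<le>d. f i * g j * (\<Sum>z\<in>UNIV. A i $ x $ z * A j $ z $ y))"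
      by (simp add: sum.swap[of _ UNIV] sum_distrib_left)
    also have "\<dots> = (\<Sum>i\<le>d. \<Sum>j\<le>d. f i * g j * (A i ** A j) $ x $ y)"
      by (simp add: matrix_matrix_mult_def)
    also have "\<dots> = (\<Sum>i\<le>d. \<Sum>j\<le>d. f i * g j * H i j (class_of x y))"
      by (intro sum.cong refl) (simp add: H)
    finally show ?thesis .
  qed
  hence "class_matrix f ** class_matrix g
      = class_matrix (\<lambda>k. \<Sum>i\<le>d. \<Sum>j\<le>d. f i * g j * H i j k)"
    by (simp add: vec_eq_iff)
  thus ?thesis by blast
qed

lemma schur_class_matrix_A: "k \<le> d \<Longrightarrow> class_matrix f \<circ>\<^sub>S A k = mscale (f k) (A k)"
  by (auto simp: vec_eq_iff schur_def mscale_def A_entry)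

lemma diag_A_mult_transpose_nonzero:
  assumes k: "k \<le> d" and "A k $ x $ y = 1"
  shows "(A k ** transpose (A k)) $ x $ x \<noteq> 0"
proof -
  have nonneg: "0 \<le> Re (A k $ x $ z * A k $ x $ z)" for z
    using A_entry_01[OF k, of x z] by auto
  have "1 = Re (A k $ x $ y * A k $ x $ y)" using assms(2) by simp
  also have "\<dots> \<le> (\<Sum>z\<in>UNIV. Re (A k $ x $ z * A k $ x $ z))"
    by (rule member_le_sum) (use nonneg in auto)
  also have "\<dots> = Re ((A k ** transpose (A k)) $ x $ x)"
    by (simp add: matrix_matrix_mult_def transpose_def Re_sum)
  finally show ?thesis by auto
qed

text \<open>\<open>assoc_scheme\<close> does not exclude a zero relation \<open>A k = 0\<close>; such \<open>k\<close> are left out here.\<close>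
definition nonempty_classes :: "nat set" where
  "nonempty_classes = {class_of x y | x y. True}"

lemma nonempty_classes_le: "k \<in> nonempty_classes \<Longrightarrow> k \<le> d"
  unfolding nonempty_classes_def using class_of_le by auto

lemma finite_nonempty_classes: "finite nonempty_classes"
  using nonempty_classes_le finite_subset[of nonempty_classes "{..d}"] by auto

lemma A_eq_0_if_empty_class: "k \<le> d \<Longrightarrow> k \<notin> nonempty_classes \<Longrightarrow> A k = 0"
  unfolding nonempty_classes_def by (auto simp: vec_eq_iff A_entry)

end

locale scheme_homomorphism = association_scheme d A for d and A :: "nat \<Rightarrow> 'n::finite cmat" +
  fixes K :: "complex set" and \<psi> :: "'n cmat \<Rightarrow> 'n cmat"
  assumes field: "subfield_complex K"
    and maps_into: "\<forall>M\<in>span_over K d A. \<psi> M \<in> span_over K d A"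
    and additive: "\<forall>M\<in>span_over K d A. \<forall>N\<in>span_over K d A. \<psi> (M + N) = \<psi> M + \<psi> N"
    and homog: "\<forall>c\<in>K. \<forall>M\<in>span_over K d A. \<psi> (mscale c M) = mscale c (\<psi> M)"
    and nonzero: "\<exists>M\<in>span_over K d A. \<psi> M \<noteq> 0"
    and mult: "\<forall>M\<in>span_over K d A. \<forall>N\<in>span_over K d A. \<psi> (M ** N) = \<psi> M ** \<psi> N"
    and schur_mult: "\<forall>M\<in>span_over K d A. \<forall>N\<in>span_over K d A. \<psi> (M \<circ>\<^sub>S N) = \<psi> M \<circ>\<^sub>S \<psi> N"
begin

abbreviation "SK \<equiv> span_over K d A"

lemma K_0: "0 \<in> K" and K_1: "1 \<in> K" and K_add: "x \<in> K \<Longrightarrow> y \<in> K \<Longrightarrow> x + y \<in> K"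
  and K_mult: "x \<in> K \<Longrightarrow> y \<in> K \<Longrightarrow> x * y \<in> K"
  using field unfolding subfield_complex_def by auto

lemma SK_iff: "M \<in> SK \<longleftrightarrow> (\<exists>f. M = class_matrix f) \<and> (\<forall>x y. M $ x $ y \<in> K)"
  using span_over_iff[OF K_0] .

lemma SK_add: "M \<in> SK \<Longrightarrow> N \<in> SK \<Longrightarrow> M + N \<in> SK"
  unfolding SK_iff by (auto simp: class_matrix_add K_add)

lemma SK_mscale: "c \<in> K \<Longrightarrow> M \<in> SK \<Longrightarrow> mscale c M \<in> SK"
  unfolding SK_iff by (auto simp: mscale_class_matrix K_mult)

lemma SK_schur: "M \<in> SK \<Longrightarrow> N \<in> SK \<Longrightarrow> M \<circ>\<^sub>S N \<in> SK"
  unfolding SK_iff by (auto simp: schur_class_matrix K_mult)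

lemma SK_mult: "M \<in> SK \<Longrightarrow> N \<in> SK \<Longrightarrow> M ** N \<in> SK"
  unfolding SK_iff using class_matrix_mult
  by (auto simp: matrix_matrix_mult_def intro!: subfield_complex_sum[OF field] K_mult)

lemma SK_A: "k \<le> d \<Longrightarrow> A k \<in> SK"
  using A_eq_class_matrix unfolding SK_iff by (auto simp: K_0 K_1)

lemma SK_0: "0 \<in> SK"
  unfolding SK_iff using zero_eq_class_matrix K_0 by auto

lemma SK_1: "mat 1 \<in> SK"
  using SK_A[of 0] A_0 by simp

lemma SK_transpose_A: "k \<le> d \<Longrightarrow> transpose (A k) \<in> SK"
  using transpose_A SK_A by metis

lemma SK_sum: "finite I \<Longrightarrow> (\<And>i. i \<in> I \<Longrightarrow> M i \<in> SK) \<Longrightarrow> (\<Sum>i\<in>I. M i) \<in> SK"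
  by (induction I rule: finite_induct) (auto simp: SK_0 SK_add)

lemma psi_0: "\<psi> 0 = 0"
  using homog SK_0 K_0 by (metis mscale_0_left)

lemma psi_lincomb:
  assumes "finite I" "\<And>i. i \<in> I \<Longrightarrow> c i \<in> K" "\<And>i. i \<in> I \<Longrightarrow> M i \<in> SK"
  shows "\<psi> (\<Sum>i\<in>I. mscale (c i) (M i)) = (\<Sum>i\<in>I. mscale (c i) (\<psi> (M i)))"
  using assms
proof (induction I rule: finite_induct)
  case empty
  then show ?case using psi_0 by simp
next
  case (insert i I)
  have "(\<Sum>i\<in>I. mscale (c i) (M i)) \<in> SK" "mscale (c i) (M i) \<in> SK"
    using insert by (auto intro!: SK_sum SK_mscale)
  then show ?case using insert additive homog by simp
qed

lemma psi_A_entry_01: "k \<le> d \<Longrightarrow> \<psi> (A k) $ x $ y = 0 \<or> \<psi> (A k) $ x $ y = 1"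
proof (rule schur_idempotent_entry_01)
  assume k: "k \<le> d"
  have "A k \<circ>\<^sub>S A k = A k" using A_entry_01[OF k] by (auto simp: vec_eq_iff schur_def)
  thus "\<psi> (A k) \<circ>\<^sub>S \<psi> (A k) = \<psi> (A k)" using schur_mult SK_A[OF k] by metis
qed

lemma psi_A_eq_0_if_kernel_entry:
  assumes M: "M \<in> SK" and "\<psi> M = 0" and "M $ x $ y \<noteq> 0"
  shows "\<psi> (A (class_of x y)) = 0"
proof -
  let ?k = "class_of x y"
  obtain f where f: "M = class_matrix f" using M SK_iff by blast
  have fk: "f ?k \<noteq> 0" "f ?k \<in> K" using assms(3) f M SK_iff by auto
  have "\<psi> (M \<circ>\<^sub>S A ?k) = \<psi> M \<circ>\<^sub>S \<psi> (A ?k)" using schur_mult M SK_A[OF class_of_le] by blast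
  hence "\<psi> (mscale (f ?k) (A ?k)) = 0"
    using assms(2) schur_class_matrix_A[OF class_of_le] f by (simp add: schur_def vec_eq_iff)
  hence "mscale (f ?k) (\<psi> (A ?k)) = 0" using homog fk(2) SK_A[OF class_of_le] by simp
  thus ?thesis using fk(1) by (simp add: mscale_def vec_eq_iff)
qed

lemma psi_kernel_trivial: assumes M: "M \<in> SK" and z: "\<psi> M = 0" shows "M = 0"
proof (rule ccontr)
  assume "M \<noteq> 0"
  then obtain x y where "M $ x $ y \<noteq> 0" by (auto simp: vec_eq_iff)
  let ?k = "class_of x y"
  have psi_k: "\<psi> (A ?k) = 0" using psi_A_eq_0_if_kernel_entry[OF M z] \<open>M $ x $ y \<noteq> 0\<close> .
  let ?T = "A ?k ** transpose (A ?k)"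
  have T: "?T \<in> SK" using SK_mult SK_A SK_transpose_A class_of_le by blast
  have "\<psi> ?T = 0" using mult SK_A SK_transpose_A class_of_le psi_k by simp
  hence "\<psi> (A (class_of x x)) = 0"
    using psi_A_eq_0_if_kernel_entry[OF T] diag_A_mult_transpose_nonzero[OF class_of_le A_class_of]
    by blast
  hence psi_1: "\<psi> (mat 1) = 0" using class_of_diag A_0 by simp
  have "\<psi> N = \<psi> (mat 1) ** \<psi> N" if "N \<in> SK" for N
    using mult SK_1 that by (metis matrix_mul_lid)
  hence "\<psi> N = 0" if "N \<in> SK" for N
    using that psi_1 by (simp add: matrix_matrix_mult_def vec_eq_iff)
  thus False using nonzero by blast
qed

text \<open>Shown below to be a singleton \<open>{\<sigma> k}\<close>, so that \<open>\<psi> (A k) = A (\<sigma> k)\<close>.\<close>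
definition image_classes :: "nat \<Rightarrow> nat set" where
  "image_classes k = {class_of x y | x y. \<psi> (A k) $ x $ y = 1}"

lemma image_classes_subset: "image_classes k \<subseteq> nonempty_classes"
  unfolding image_classes_def nonempty_classes_def by auto

lemma psi_A_constant_on_class:
  assumes "k \<le> d" "class_of x y = class_of x' y'"
  shows "\<psi> (A k) $ x $ y = \<psi> (A k) $ x' $ y'"
proof -
  obtain g where "\<psi> (A k) = class_matrix g" using maps_into SK_A[OF assms(1)] SK_iff by blast
  thus ?thesis using assms(2) by simp
qed

lemma image_classes_nonempty:
  assumes k: "k \<in> nonempty_classes" shows "image_classes k \<noteq> {}"
proof -
  have kd: "k \<le> d" using nonempty_classes_le k .
  obtain x y where "class_of x y = k" using k nonempty_classes_def by auto
  hence "A k $ x $ y \<noteq> 0" using A_class_of[of x y] by simp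
  hence "A k \<noteq> 0" by auto
  hence "\<psi> (A k) \<noteq> 0" using psi_kernel_trivial SK_A[OF kd] by blast
  then obtain u v where "\<psi> (A k) $ u $ v \<noteq> 0" by (auto simp: vec_eq_iff)
  hence "\<psi> (A k) $ u $ v = 1" using psi_A_entry_01[OF kd] by blast
  thus ?thesis unfolding image_classes_def by blast
qed

lemma image_classes_disjoint:
  assumes "k \<le> d" "l \<le> d" "k \<noteq> l" shows "image_classes k \<inter> image_classes l = {}"
proof (rule ccontr)
  assume "image_classes k \<inter> image_classes l \<noteq> {}"
  then obtain x y x' y' where same: "class_of x y = class_of x' y'"
    and one: "\<psi> (A k) $ x $ y = 1" "\<psi> (A l) $ x' $ y' = 1"
    unfolding image_classes_def by auto
  have one': "\<psi> (A l) $ x $ y = 1" using psi_A_constant_on_class[OF assms(2) same] one(2) by simp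
  have "A k \<circ>\<^sub>S A l = 0" using assms by (auto simp: vec_eq_iff schur_def A_entry)
  moreover have "\<psi> (A k \<circ>\<^sub>S A l) = \<psi> (A k) \<circ>\<^sub>S \<psi> (A l)" using schur_mult SK_A assms by blast
  ultimately have "(\<psi> (A k) \<circ>\<^sub>S \<psi> (A l)) $ x $ y = 0" using psi_0 by simp
  hence "\<psi> (A k) $ x $ y * \<psi> (A l) $ x $ y = 0" by (simp add: schur_def)
  thus False using one(1) one' by simp
qed

lemma image_classes_singletons:
  shows "\<forall>k\<in>nonempty_classes. card (image_classes k) = 1"
    and "(\<Union>k\<in>nonempty_classes. image_classes k) = nonempty_classes"
proof -
  have "image_classes k \<inter> image_classes l = {}"
    if "k \<in> nonempty_classes" "l \<in> nonempty_classes" "k \<noteq> l" for k l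
    using image_classes_disjoint nonempty_classes_le that by blast
  note singletons = disjoint_nonempty_subsets_singletons[OF finite_nonempty_classes
      image_classes_subset image_classes_nonempty this]
  show "\<forall>k\<in>nonempty_classes. card (image_classes k) = 1" by (rule singletons(1))
  show "(\<Union>k\<in>nonempty_classes. image_classes k) = nonempty_classes" by (rule singletons(2))
qed

definition \<sigma> :: "nat \<Rightarrow> nat" where "\<sigma> k = the_elem (image_classes k)"

lemma image_classes_eq:
  assumes "k \<in> nonempty_classes" shows "image_classes k = {\<sigma> k}"
proof -
  have "card (image_classes k) = 1" using image_classes_singletons(1) assms by blast
  then obtain a where "image_classes k = {a}" by (rule card_1_singletonE)
  thus ?thesis unfolding \<sigma>_def by simp
qed

lemma \<sigma>_nonempty: "k \<in> nonempty_classes \<Longrightarrow> \<sigma> k \<in> nonempty_classes"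
  using image_classes_eq image_classes_subset by blast

lemma psi_A: assumes k: "k \<in> nonempty_classes" shows "\<psi> (A k) = A (\<sigma> k)"
proof -
  have kd: "k \<le> d" and \<sigma>d: "\<sigma> k \<le> d"
    using nonempty_classes_le \<sigma>_nonempty k by auto
  have "\<psi> (A k) $ x $ y = 1 \<longleftrightarrow> class_of x y = \<sigma> k" for x y
  proof
    assume "\<psi> (A k) $ x $ y = 1"
    thus "class_of x y = \<sigma> k"
      using image_classes_eq[OF k] unfolding image_classes_def by blast
  next
    assume "class_of x y = \<sigma> k"
    then obtain x' y' where same: "class_of x y = class_of x' y'" and "\<psi> (A k) $ x' $ y' = 1"
      using image_classes_eq[OF k] unfolding image_classes_def by blast
    thus "\<psi> (A k) $ x $ y = 1" using psi_A_constant_on_class[OF kd same] by simp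
  qed
  hence "\<psi> (A k) $ x $ y = A (\<sigma> k) $ x $ y" for x y
    using psi_A_entry_01[OF kd, of x y] A_entry[OF \<sigma>d, of x y] by auto
  thus ?thesis by (simp add: vec_eq_iff)
qed

lemma psi_1: "\<psi> (mat 1) = mat 1"
proof -
  have "0 \<in> nonempty_classes" unfolding nonempty_classes_def using class_of_diag[symmetric] by blast
  then obtain j where j: "j \<in> nonempty_classes" "0 \<in> image_classes j"
    using image_classes_singletons(2) by blast
  have \<sigma>j: "\<sigma> j = 0" using j image_classes_eq by simp
  have jd: "j \<le> d" using nonempty_classes_le j(1) .
  have "\<psi> (A j) = \<psi> (A 0 ** A j)" using A_0 by simp
  also have "\<dots> = \<psi> (A 0) ** \<psi> (A j)" using mult SK_A jd by simp
  finally have "mat 1 = \<psi> (mat 1) ** mat 1" using psi_A[OF j(1)] \<sigma>j A_0 by simp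
  thus ?thesis by simp
qed

text \<open>\<open>A\<^sub>k\<^sup>T\<close> is the unique relation \<open>A\<^sub>j\<close> with \<open>I \<circ> (A\<^sub>k A\<^sub>j) \<noteq> 0\<close>, and \<open>\<psi>\<close> preserves this.\<close>
lemma psi_transpose_A: assumes kd: "k \<le> d" shows "\<psi> (transpose (A k)) = transpose (\<psi> (A k))"
proof (cases "k \<in> nonempty_classes")
  case False
  hence "A k = 0" using A_eq_0_if_empty_class kd by blast
  moreover have "transpose (0::'n cmat) = 0" by (simp add: vec_eq_iff transpose_def)
  ultimately show ?thesis using psi_0 by simp
next
  case k: True
  obtain x y where xy: "class_of x y = k" using k nonempty_classes_def by auto
  obtain j where j: "j \<le> d" "transpose (A k) = A j" using transpose_A[OF kd] by blast
  have "A j $ y $ x = 1" using j(2)[symmetric] A_class_of[of x y] xy by (simp add: transpose_def)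
  hence "class_of y x = j" using A_entry[OF j(1)] by (simp split: if_splits)
  hence jZ: "j \<in> nonempty_classes" unfolding nonempty_classes_def by blast
  have \<sigma>kd: "\<sigma> k \<le> d" and \<sigma>jd: "\<sigma> j \<le> d"
    using \<sigma>_nonempty nonempty_classes_le k jZ by auto
  obtain m where m: "m \<le> d" "transpose (A (\<sigma> k)) = A m" using transpose_A[OF \<sigma>kd] by blast
  let ?T = "A k ** A j"
  have T: "?T \<in> SK" using SK_mult SK_A kd j(1) by blast
  have "(mat 1 \<circ>\<^sub>S ?T) $ x $ x \<noteq> 0"
    using diag_A_mult_transpose_nonzero[OF kd] A_class_of[of x y] xy j(2)
    by (simp add: schur_def mat_def)
  hence "mat 1 \<circ>\<^sub>S ?T \<noteq> 0" by auto
  hence "\<psi> (mat 1 \<circ>\<^sub>S ?T) \<noteq> 0" using psi_kernel_trivial SK_schur[OF SK_1 T] by blast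
  moreover have "\<psi> (mat 1 \<circ>\<^sub>S ?T) = \<psi> (mat 1) \<circ>\<^sub>S (\<psi> (A k) ** \<psi> (A j))"
    using schur_mult mult SK_1 T SK_A kd j(1) by simp
  ultimately have "mat 1 \<circ>\<^sub>S (A (\<sigma> k) ** A (\<sigma> j)) \<noteq> 0"
    using psi_1 psi_A k jZ by simp
  then obtain u v where "(mat 1 \<circ>\<^sub>S (A (\<sigma> k) ** A (\<sigma> j))) $ u $ v \<noteq> 0"
    by (metis vec_eq_iff zero_index)
  hence "(A (\<sigma> k) ** A (\<sigma> j)) $ u $ u \<noteq> 0"
    by (auto simp: schur_def mat_def split: if_splits)
  then obtain z where z: "A (\<sigma> k) $ u $ z * A (\<sigma> j) $ z $ u \<noteq> 0"
    unfolding matrix_matrix_mult_def using sum.not_neutral_contains_not_neutral by force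
  have "class_of u z = \<sigma> k" "class_of z u = \<sigma> j"
    using z A_entry[OF \<sigma>kd, of u z] A_entry[OF \<sigma>jd, of z u] by (auto split: if_splits)
  moreover have "A m $ z $ u = 1"
    using m(2)[symmetric] calculation(1) A_class_of[of u z] by (simp add: transpose_def)
  ultimately have "\<sigma> j = m" using A_entry[OF m(1)] by (simp split: if_splits)
  thus ?thesis using j(2) psi_A[OF jZ] psi_A[OF k] m(2) by simp
qed

lemma psi_expansion:
  assumes "\<forall>k\<le>d. c k \<in> K" and "M = (\<Sum>k\<le>d. mscale (c k) (A k))"
  shows "\<psi> M = (\<Sum>k\<le>d. mscale (c k) (\<psi> (A k)))"
  unfolding assms(2) by (rule psi_lincomb) (use assms(1) SK_A in auto)

lemma psi_transpose: assumes "M \<in> SK" shows "\<psi> (transpose M) = transpose (\<psi> M)"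
proof -
  obtain c where c: "\<forall>k\<le>d. c k \<in> K" "M = (\<Sum>k\<le>d. mscale (c k) (A k))"
    using assms unfolding span_over_def by blast
  have "\<psi> (transpose M) = \<psi> (\<Sum>k\<le>d. mscale (c k) (transpose (A k)))"
    using c(2) by (simp add: transpose_sum transpose_mscale)
  also have "\<dots> = (\<Sum>k\<le>d. mscale (c k) (\<psi> (transpose (A k))))"
    by (rule psi_lincomb) (use c(1) SK_transpose_A in auto)
  also have "\<dots> = (\<Sum>k\<le>d. mscale (c k) (transpose (\<psi> (A k))))"
    by (intro sum.cong refl) (simp add: psi_transpose_A)
  also have "\<dots> = transpose (\<psi> M)"
    using psi_expansion[OF c] by (simp add: transpose_sum transpose_mscale)
  finally show ?thesis .
qed

lemma psi_cstar:
  assumes "\<forall>x\<in>K. cnj x \<in> K" and "M \<in> SK"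
  shows "\<psi> (cstar M) = cstar (\<psi> M)"
proof -
  obtain c where c: "\<forall>k\<le>d. c k \<in> K" "M = (\<Sum>k\<le>d. mscale (c k) (A k))"
    using assms(2) unfolding span_over_def by blast
  have "\<psi> (cstar M) = \<psi> (\<Sum>k\<le>d. mscale (cnj (c k)) (transpose (A k)))"
    using c(2) A_entry_01 by (simp add: cstar_sum cstar_mscale cstar_eq_transpose_if_01)
  also have "\<dots> = (\<Sum>k\<le>d. mscale (cnj (c k)) (\<psi> (transpose (A k))))"
    by (rule psi_lincomb) (use c(1) assms(1) SK_transpose_A in auto)
  also have "\<dots> = (\<Sum>k\<le>d. mscale (cnj (c k)) (cstar (\<psi> (A k))))"
    by (intro sum.cong refl)
      (simp add: psi_transpose_A cstar_eq_transpose_if_01[OF psi_A_entry_01])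
  also have "\<dots> = cstar (\<psi> M)"
    using psi_expansion[OF c] by (simp add: cstar_sum cstar_mscale)
  finally show ?thesis .
qed

end

theorem lemma3p2:
  fixes d :: nat and A :: "nat \<Rightarrow> 'n::finite cmat" and K :: "complex set"
    and \<psi> :: "'n cmat \<Rightarrow> 'n cmat"
  assumes scheme: "assoc_scheme d A"
    and field: "subfield_complex K"
    and splitting: "contains_splitting_field K d A"
    and conj_closed: "\<forall>x\<in>K. cnj x \<in> K"
    and maps_into: "\<forall>M\<in>span_over K d A. \<psi> M \<in> span_over K d A"
    and additive: "\<forall>M\<in>span_over K d A. \<forall>N\<in>span_over K d A. \<psi> (M + N) = \<psi> M + \<psi> N"
    and homog: "\<forall>c\<in>K. \<forall>M\<in>span_over K d A. \<psi> (mscale c M) = mscale c (\<psi> M)"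
    and nonzero: "\<exists>M\<in>span_over K d A. \<psi> M \<noteq> 0"
    and mult: "\<forall>M\<in>span_over K d A. \<forall>N\<in>span_over K d A. \<psi> (M ** N) = \<psi> M ** \<psi> N"
    and schur_mult: "\<forall>M\<in>span_over K d A. \<forall>N\<in>span_over K d A. \<psi> (M \<circ>\<^sub>S N) = \<psi> M \<circ>\<^sub>S \<psi> N"
  shows "\<forall>M\<in>span_over K d A. \<psi> (transpose M) = transpose (\<psi> M) \<and> \<psi> (cstar M) = cstar (\<psi> M)"
proof -
  interpret scheme_homomorphism d A K \<psi>
    using scheme field maps_into additive homog nonzero mult schur_mult
    by unfold_locales
  show ?thesis using psi_transpose psi_cstar[OF conj_closed] by blast
qed

end
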